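(* Let $(S,M)$ be a surface with marked points and empty boundary, and let $T$ be an ideal triangulation of $(S,M)$ such that at each puncture $p\in M$ there are at least three arcs of $T$ incident to $p$ (an arc starting and ending at the same puncture counted twice). Let $Q$ be the adjacency quiver of $T$, with vertex set $Q_0$ and arrow set $Q_1$. Then: (a) $Q$ is connected and has no loops or $2$-cycles; (b) for every $i\in Q_0$ there are exactly two arrows starting at $i$ and exactly two arrows ending at $i$; (c) there are bijections $f,g:Q_1\to Q_1$ such that for every $\alpha\in Q_1$ the set $\{f(\alpha),g(\alpha)\}$ consists of the two arrows that start at the vertex at which $\alpha$ ends, and $f^3$ is the identity on $Q_1$.
   Context: A surface with marked points and empty boundary is a pair $(S,M)$ with $S$ a compact, connected, oriented surface without boundary and $M\subset S$ a finite non-empty set of punctures. The adjacency quiver $Q$ of $T$ has the arcs of $T$ as vertices, and for each puncture $p$ and each pair of arcs $i,j$ incident to $p$ such that $j$ immediately follows $i$ in the counterclockwise order around $p$, an arrow $i\to j$ (one arrow per such occurrence). *)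

theory Defs
  imports Main
begin

text \<open>Combinatorial model of an ideal triangulation T of a closed oriented
connected surface with punctures.  H is the finite set of sides of the
triangles of T.  sigma rotates the sides of each triangle in counterclockwise
order (every sigma-orbit has exactly 3 elements, one per triangle), iota
identifies the two sides glued to form one arc (a fixed-point-free involution,
the gluing being orientation reversing).  Side h runs from vertex start(h) to
vertex end(h) counterclockwise along its triangle.\<close>

definition ideal_triangulation :: "'h set \<Rightarrow> ('h \<Rightarrow> 'h) \<Rightarrow> ('h \<Rightarrow> 'h) \<Rightarrow> bool" where
  "ideal_triangulation H sigma iota \<longleftrightarrow>
     finite H \<and> H \<noteq> {} \<and>
     bij_betw sigma H H \<and> (\<forall>h\<in>H. sigma h \<noteq> h \<and> (sigma ^^ 3) h = h) \<and>
     (\<forall>h\<in>H. iota h \<in> H \<and> iota h \<noteq> h \<and> iota (iota h) = h) \<and>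
     (\<forall>h\<in>H. \<forall>k\<in>H. (h, k) \<in> ({(x, sigma x) | x. x \<in> H} \<union> {(x, iota x) | x. x \<in> H})\<^sup>*)"

definition arc_of :: "('h \<Rightarrow> 'h) \<Rightarrow> 'h \<Rightarrow> 'h set" where
  "arc_of iota h = {h, iota h}"

definition arcs :: "'h set \<Rightarrow> ('h \<Rightarrow> 'h) \<Rightarrow> 'h set set" where
  "arcs H iota = arc_of iota ` H"

text \<open>Corners of triangles: corner h is the angle between sides h and sigma h,
at the vertex end(h) = start(sigma h).  Rotating counterclockwise around a
puncture, corner h is followed by corner sigma^-1 (iota h) = sigma^2 (iota h).
The orbits of this rotation are the punctures; the size of an orbit is the
number of arc ends at the puncture (loops counted twice).\<close>
definition puncture_rot :: "('h \<Rightarrow> 'h) \<Rightarrow> ('h \<Rightarrow> 'h) \<Rightarrow> 'h \<Rightarrow> 'h" where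
  "puncture_rot sigma iota h = (sigma ^^ 2) (iota h)"

definition corners_at_puncture :: "('h \<Rightarrow> 'h) \<Rightarrow> ('h \<Rightarrow> 'h) \<Rightarrow> 'h \<Rightarrow> 'h set" where
  "corners_at_puncture sigma iota h = {(puncture_rot sigma iota ^^ n) h | n. True}"

text \<open>Adjacency quiver: vertices are the arcs, arrows are the corners (one
arrow per occurrence of two consecutive arcs around a puncture).  At corner h
the arc of sigma h is immediately followed, counterclockwise, by the arc of h,
giving an arrow arc(sigma h) -> arc(h).\<close>
definition adj_src :: "('h \<Rightarrow> 'h) \<Rightarrow> ('h \<Rightarrow> 'h) \<Rightarrow> 'h \<Rightarrow> 'h set" where
  "adj_src sigma iota h = arc_of iota (sigma h)"

definition adj_tgt :: "('h \<Rightarrow> 'h) \<Rightarrow> ('h \<Rightarrow> 'h) \<Rightarrow> 'h \<Rightarrow> 'h set" where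
  "adj_tgt sigma iota h = arc_of iota h"

definition quiver_connected :: "'v set \<Rightarrow> 'e set \<Rightarrow> ('e \<Rightarrow> 'v) \<Rightarrow> ('e \<Rightarrow> 'v) \<Rightarrow> bool" where
  "quiver_connected V E s t \<longleftrightarrow> V \<noteq> {} \<and>
     (\<forall>i\<in>V. \<forall>j\<in>V. (i, j) \<in> ({(s a, t a) | a. a \<in> E} \<union> {(t a, s a) | a. a \<in> E})\<^sup>*)"

definition quiver_no_loops :: "'e set \<Rightarrow> ('e \<Rightarrow> 'v) \<Rightarrow> ('e \<Rightarrow> 'v) \<Rightarrow> bool" where
  "quiver_no_loops E s t \<longleftrightarrow> (\<forall>a\<in>E. s a \<noteq> t a)"

definition quiver_no_2cycles :: "'e set \<Rightarrow> ('e \<Rightarrow> 'v) \<Rightarrow> ('e \<Rightarrow> 'v) \<Rightarrow> bool" where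
  "quiver_no_2cycles E s t \<longleftrightarrow> \<not> (\<exists>a\<in>E. \<exists>b\<in>E. s a = t b \<and> t a = s b \<and> s a \<noteq> t a)"

end

theory Submission
  imports Defs
begin

text \<open>The two arrows starting at the arc
\<open>{h, \<iota> h}\<close> are the corners \<open>\<sigma>\<^sup>2 h\<close> and \<open>\<sigma>\<^sup>2 (\<iota> h)\<close>, the two ending there are \<open>h\<close>
and \<open>\<iota> h\<close>.  The arrows starting where corner \<open>a\<close> ends are \<open>\<sigma>\<^sup>2 a\<close> (the next
corner of the same triangle) and the next corner around the puncture; so
\<open>f = \<sigma>\<^sup>2\<close> and \<open>g\<close> the puncture rotation work, and \<open>f\<^sup>3 = \<sigma>\<^sup>6 = id\<close>.
A loop or a 2-cycle forces the puncture rotation to have a fixed point or an orbit of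
size two, i.e. a puncture with at most two incident arc ends, which the valency
hypothesis excludes.\<close>

lemma card_funpow_orbit_le:
  assumes "(f ^^ n) x = x" and "n > 0"
  shows "card {(f ^^ k) x | k. True} \<le> n"
proof -
  have "{(f ^^ k) x | k. True} \<subseteq> (\<lambda>k. (f ^^ k) x) ` {..<n}"
  proof clarify
    fix k
    have "(f ^^ k) x = (f ^^ (k mod n)) x" using funpow_mod_eq[OF assms(1)] by simp
    then show "(f ^^ k) x \<in> (\<lambda>k. (f ^^ k) x) ` {..<n}" using assms(2) by auto
  qed
  then have "card {(f ^^ k) x | k. True} \<le> card ((\<lambda>k. (f ^^ k) x) ` {..<n})"
    by (intro card_mono) auto
  also have "\<dots> \<le> n"
    using card_image_le[of "{..<n}"] by simp
  finally show ?thesis .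
qed

locale punctured_triangulation =
  fixes H :: "'h set" and sigma iota :: "'h \<Rightarrow> 'h"
  assumes triangulation: "ideal_triangulation H sigma iota"
    and valency: "\<forall>h\<in>H. card (corners_at_puncture sigma iota h) \<ge> 3"
begin

abbreviation rot :: "'h \<Rightarrow> 'h" where
  "rot \<equiv> puncture_rot sigma iota"

lemma H_nonempty: "H \<noteq> {}"
  and bij_sigma: "bij_betw sigma H H"
  and sigma_neq: "h \<in> H \<Longrightarrow> sigma h \<noteq> h"
  and sigma_sigma_sigma: "h \<in> H \<Longrightarrow> sigma (sigma (sigma h)) = h"
  and iota_in: "h \<in> H \<Longrightarrow> iota h \<in> H"
  and iota_neq: "h \<in> H \<Longrightarrow> iota h \<noteq> h"
  and iota_iota: "h \<in> H \<Longrightarrow> iota (iota h) = h"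
  using triangulation unfolding ideal_triangulation_def by (simp_all add: numeral_3_eq_3)

lemma sides_connected: "\<lbrakk>h \<in> H; k \<in> H\<rbrakk> \<Longrightarrow>
    (h, k) \<in> ({(x, sigma x) | x. x \<in> H} \<union> {(x, iota x) | x. x \<in> H})\<^sup>*"
  using triangulation unfolding ideal_triangulation_def by blast

lemma sigma_in: "h \<in> H \<Longrightarrow> sigma h \<in> H"
  using bij_sigma by (auto simp: bij_betw_def)

lemma bij_iota: "bij_betw iota H H"
  by (rule bij_betw_byWitness[where f' = iota]) (auto simp: iota_in iota_iota)

lemma rot_eq: "rot h = sigma (sigma (iota h))"
  by (simp add: puncture_rot_def numeral_2_eq_2)

lemma bij_sigma_sigma: "bij_betw (\<lambda>a. sigma (sigma a)) H H"
  using bij_betw_trans[OF bij_sigma bij_sigma] by (simp add: comp_def)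

lemma bij_rot: "bij_betw rot H H"
proof -
  have "rot = (\<lambda>a. sigma (sigma a)) \<circ> iota" by (simp add: fun_eq_iff rot_eq)
  then show ?thesis using bij_betw_trans[OF bij_iota bij_sigma_sigma] by simp
qed

lemma funpow_sigma_sigma_3: "a \<in> H \<Longrightarrow> ((\<lambda>a. sigma (sigma a)) ^^ 3) a = a"
  using sigma_sigma_sigma sigma_in by (simp add: numeral_3_eq_3)

lemma card_corners_le_if_funpow_rot:
  assumes "(rot ^^ n) h = h" and "n > 0"
  shows "card (corners_at_puncture sigma iota h) \<le> n"
  unfolding corners_at_puncture_def using card_funpow_orbit_le[OF assms] .

lemma rot_neq: "h \<in> H \<Longrightarrow> rot h \<noteq> h"
  using card_corners_le_if_funpow_rot[of 1 h] valency by fastforce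

lemma rot_rot_neq: "h \<in> H \<Longrightarrow> rot (rot h) \<noteq> h"
  using card_corners_le_if_funpow_rot[of 2 h] valency by (fastforce simp: numeral_2_eq_2)

lemma sigma_neq_iota: "h \<in> H \<Longrightarrow> sigma h \<noteq> iota h"
  using rot_neq sigma_sigma_sigma by (metis rot_eq)

lemma arc_of_eq_iff: "\<lbrakk>x \<in> H; h \<in> H\<rbrakk> \<Longrightarrow> arc_of iota x = arc_of iota h \<longleftrightarrow> x = h \<or> x = iota h"
  unfolding arc_of_def using iota_iota by (auto simp: doubleton_eq_iff)

lemma adj_src_eq_arc_iff:
  "\<lbrakk>a \<in> H; h \<in> H\<rbrakk> \<Longrightarrow> adj_src sigma iota a = arc_of iota h \<longleftrightarrow> sigma a = h \<or> sigma a = iota h"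
  by (simp add: adj_src_def arc_of_eq_iff sigma_in)

lemma arrows_from_arc:
  assumes "h \<in> H"
  shows "{a\<in>H. adj_src sigma iota a = arc_of iota h} = {sigma (sigma h), sigma (sigma (iota h))}"
proof (intro set_eqI iffI)
  fix a assume "a \<in> {a\<in>H. adj_src sigma iota a = arc_of iota h}"
  with assms have "a \<in> H" and "sigma a = h \<or> sigma a = iota h"
    using adj_src_eq_arc_iff by auto
  then show "a \<in> {sigma (sigma h), sigma (sigma (iota h))}"
    using sigma_sigma_sigma[of a] by auto
next
  fix a assume "a \<in> {sigma (sigma h), sigma (sigma (iota h))}"
  with assms have "a \<in> H" and "sigma a = h \<or> sigma a = iota h"
    using sigma_sigma_sigma sigma_in iota_in by auto
  with assms show "a \<in> {a\<in>H. adj_src sigma iota a = arc_of iota h}"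
    using adj_src_eq_arc_iff by blast
qed

lemma arrows_to_arc: "h \<in> H \<Longrightarrow> {a\<in>H. adj_tgt sigma iota a = arc_of iota h} = {h, iota h}"
  using arc_of_eq_iff iota_in by (auto simp: adj_tgt_def)

lemma card_arrows_from_arc:
  assumes "h \<in> H"
  shows "card {a\<in>H. adj_src sigma iota a = arc_of iota h} = 2"
proof -
  have "sigma (sigma h) \<noteq> sigma (sigma (iota h))"
    using assms sigma_sigma_sigma[of h] sigma_sigma_sigma[of "iota h"] iota_neq[of h] iota_in
    by metis
  then show ?thesis using arrows_from_arc[OF assms] by simp
qed

lemma card_arrows_to_arc: "h \<in> H \<Longrightarrow> card {a\<in>H. adj_tgt sigma iota a = arc_of iota h} = 2"
  using arrows_to_arc iota_neq[of h] by simp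

lemma arrows_following: "a \<in> H \<Longrightarrow>
    {b\<in>H. adj_src sigma iota b = adj_tgt sigma iota a} = {sigma (sigma a), rot a}"
  using arrows_from_arc[of a] by (simp add: adj_tgt_def rot_eq)

lemma adjacency_quiver_connected: "quiver_connected (arcs H iota) H (adj_src sigma iota) (adj_tgt sigma iota)"
proof -
  let ?R = "{(x, sigma x) | x. x \<in> H} \<union> {(x, iota x) | x. x \<in> H}"
  let ?E = "{(adj_src sigma iota a, adj_tgt sigma iota a) | a. a \<in> H}
          \<union> {(adj_tgt sigma iota a, adj_src sigma iota a) | a. a \<in> H}"
  have "(arc_of iota h, arc_of iota k) \<in> ?E\<^sup>*" if "(h, k) \<in> ?R\<^sup>*" for h k
    using that
  proof (induction rule: rtrancl_induct)
    case (step y z)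
    \<comment> \<open>a \<open>\<sigma>\<close>-step is the reversed arrow at corner \<open>y\<close>; an \<open>\<iota>\<close>-step stays on the same arc\<close>
    have "(arc_of iota y, arc_of iota z) \<in> ?E\<^sup>="
      using step.hyps(2) iota_iota by (auto simp: adj_src_def adj_tgt_def arc_of_def)
    with step.IH show ?case by (auto intro: rtrancl_into_rtrancl)
  qed simp
  then show ?thesis
    using sides_connected H_nonempty by (auto simp: quiver_connected_def arcs_def)
qed

lemma adjacency_quiver_no_loops: "quiver_no_loops H (adj_src sigma iota) (adj_tgt sigma iota)"
  using adj_src_eq_arc_iff sigma_neq sigma_neq_iota by (simp add: quiver_no_loops_def adj_tgt_def)

lemma no_corner_2cycle:
  assumes a: "a \<in> H" and b: "b \<in> H"
    and ab: "sigma a = b \<or> sigma a = iota b" and ba: "sigma b = a \<or> sigma b = iota a"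
  shows False
proof -
  have sa: "sigma a \<in> H" and ssa: "sigma (sigma a) \<in> H" and isa: "iota (sigma a) \<in> H"
    using a sigma_in iota_in by auto
  have "b = sigma a \<or> b = iota (sigma a)"
    using ab iota_iota[OF b] by auto
  then consider "b = sigma a" "sigma b = a" | "b = sigma a" "sigma b = iota a"
    | "b = iota (sigma a)" "sigma b = a" | "b = iota (sigma a)" "sigma b = iota a"
    using ba by blast
  then show False
  proof cases
    case 1
    then have "sigma (sigma a) = a" by simp
    then show False using sigma_sigma_sigma[OF a] sigma_neq[OF a] by simp
  next
    case 2
    then have "sigma (sigma (sigma a)) = iota (sigma (sigma a))"
      using sigma_sigma_sigma[OF a] iota_iota[OF a] by simp
    then show False using sigma_neq_iota[OF ssa] by simp
  next
    case 3
    then show False using rot_neq[OF sa] by (simp add: rot_eq)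
  next
    case 4
    \<comment> \<open>then \<open>a\<close> and \<open>\<iota> (\<sigma> a)\<close> are the only corners at their puncture\<close>
    then have "rot a = iota (sigma a)"
      using sigma_sigma_sigma[OF isa] by (simp add: rot_eq)
    moreover have "rot (iota (sigma a)) = a"
      using iota_iota[OF sa] sigma_sigma_sigma[OF a] by (simp add: rot_eq)
    ultimately show False using rot_rot_neq[OF a] by simp
  qed
qed

lemma adjacency_quiver_no_2cycles: "quiver_no_2cycles H (adj_src sigma iota) (adj_tgt sigma iota)"
  unfolding quiver_no_2cycles_def adj_tgt_def
  using no_corner_2cycle adj_src_eq_arc_iff by metis

end

theorem proposition2p2:
  fixes H :: "'h set" and sigma iota :: "'h \<Rightarrow> 'h"
  assumes T: "ideal_triangulation H sigma iota"
    and val: "\<forall>h\<in>H. card (corners_at_puncture sigma iota h) \<ge> 3"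
  defines "Q0 \<equiv> arcs H iota" and "Q1 \<equiv> H"
    and "s \<equiv> adj_src sigma iota" and "t \<equiv> adj_tgt sigma iota"
  shows "(quiver_connected Q0 Q1 s t \<and> quiver_no_loops Q1 s t \<and> quiver_no_2cycles Q1 s t) \<and>
    (\<forall>i\<in>Q0. card {a\<in>Q1. s a = i} = 2 \<and> card {a\<in>Q1. t a = i} = 2) \<and>
    (\<exists>f g. bij_betw f Q1 Q1 \<and> bij_betw g Q1 Q1 \<and>
           (\<forall>a\<in>Q1. {f a, g a} = {b\<in>Q1. s b = t a}) \<and>
           (\<forall>a\<in>Q1. (f ^^ 3) a = a))"
proof -
  interpret punctured_triangulation H sigma iota
    using T val by unfold_locales
  have degrees: "card {a\<in>Q1. s a = i} = 2 \<and> card {a\<in>Q1. t a = i} = 2" if "i \<in> Q0" for i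
    using that card_arrows_from_arc card_arrows_to_arc
    unfolding Q0_def Q1_def s_def t_def arcs_def by blast
  have "{sigma (sigma a), rot a} = {b\<in>Q1. s b = t a}" if "a \<in> Q1" for a
    using that arrows_following by (simp add: Q1_def s_def t_def)
  then show ?thesis
    using adjacency_quiver_connected adjacency_quiver_no_loops adjacency_quiver_no_2cycles degrees
      bij_sigma_sigma bij_rot funpow_sigma_sigma_3
    unfolding Q0_def Q1_def s_def t_def by blast
qed

end
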